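(* Let $X$ be a compact Hausdorff space and let $a,b,c\in C(X,M_n)$ be positive elements such that $ba=a$ and $cb=b$. Then there exist open sets $U_k\subseteq X$ for $0\le k\le n$, and continuous functions $p_k\colon U_k\to M_n$ whose values are rank $k$ projections, such that: (1) $\bigcup_{k=0}^n U_k=X$; (2) if $k\le l$ and $x\in U_k\cap U_l$ then $p_k(x)\le p_l(x)$; (3) for all $x\in U_k$, $p_k(x)a(x)=a(x)$ and $c(x)p_k(x)=p_k(x)$. *)

theory Defs
  imports "HOL-Analysis.Analysis"
begin

text \<open>Complex n x n matrices M_n are modelled as complex^'n^'n with 'n a finite type,
  n = CARD('n). Adjoint = conjugate transpose.\<close>

definition cadj :: "complex^'n^'m \<Rightarrow> complex^'m^'n" where
  "cadj A = (\<chi> i j. cnj (A $ j $ i))"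

definition mpos :: "complex^'n^'n \<Rightarrow> bool" where
  "mpos A \<longleftrightarrow> (\<exists>B::complex^'n^'n. A = cadj B ** B)"

definition mle :: "complex^'n^'n \<Rightarrow> complex^'n^'n \<Rightarrow> bool" where
  "mle A B \<longleftrightarrow> mpos (B - A)"

definition mproj :: "complex^'n^'n \<Rightarrow> bool" where
  "mproj P \<longleftrightarrow> cadj P = P \<and> P ** P = P"

end

theory Submission
  imports Defs
begin

text \<open>
  Diagonalise \<open>b x = U diag \<lambda> U\<^sup>*\<close> with \<open>U\<close> unitary. For a cut \<open>s \<in> (0,1)\<close> that is not an
  eigenvalue of \<open>b x\<close>, the spectral projection of \<open>b x\<close> onto the eigenvalues above \<open>s\<close> fixes
  \<open>a x\<close>, because \<open>b a = a\<close> puts the range of \<open>a x\<close> into the 1-eigenspace, and lies under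
  \<open>c x\<close>, because it is \<open>b x\<close> times a function of \<open>b x\<close> and \<open>c b = b\<close>. Let \<open>U\<^sub>k\<close> be the set of
  points admitting such a cut with exactly \<open>k\<close> eigenvalues above it: all these cuts give the same
  projection \<open>p\<^sub>k x\<close>, and cuts with a larger count give larger projections. Near a point of
  \<open>U\<^sub>k\<close> its cut stays a cut with count \<open>k\<close>, and there \<open>p\<^sub>k\<close> is a fixed ramp function of \<open>b\<close>.
  Functions of Hermitian matrices given by Lipschitz functions are Lipschitz for the Frobenius
  norm, so \<open>p\<^sub>k\<close> is continuous.
\<close>

section \<open>Adjoints, ranks and unitary diagonalisation\<close>

lemma cadj_nth [simp]: "cadj A $ i $ j = cnj (A $ j $ i)"
  by (simp add: cadj_def)

lemma cadj_cadj [simp]: "cadj (cadj A) = A"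
  by (simp add: vec_eq_iff)

lemma cadj_matrix_mul: "cadj (A ** B) = cadj B ** cadj A"
  by (simp add: vec_eq_iff matrix_matrix_mult_def mult.commute)

lemma matrix_mul_diff_left: "(A::'a::ring_1^'n^'m) ** (B - C) = A ** B - A ** C"
  by (simp add: vec_eq_iff matrix_matrix_mult_def algebra_simps sum_subtractf)

lemma matrix_mul_diff_right: "((A::'a::ring_1^'n^'m) - B) ** C = A ** C - B ** C"
  by (simp add: vec_eq_iff matrix_matrix_mult_def algebra_simps sum_subtractf)

lemma mpos_hermitian: "mpos A \<Longrightarrow> cadj A = A"
  unfolding mpos_def by (auto simp: cadj_matrix_mul)

lemma mproj_mpos: "mproj P \<Longrightarrow> mpos P"
  unfolding mproj_def mpos_def by (intro exI[of _ P]) simp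

lemma row_matrix_mul: "row i (A ** B) = (\<Sum>j\<in>UNIV. A $ i $ j *s row j B)"
  by (simp add: vec_eq_iff row_def matrix_matrix_mult_def)

lemma rank_matrix_mul_le_right: "rank (A ** B) \<le> rank (B :: 'a::field^'n^'m)"
proof -
  have "row i (A ** B) \<in> vec.span (rows B)" for i
    unfolding row_matrix_mul by (intro vec.span_sum vec.span_scale vec.span_base) (auto simp: rows_def)
  then have "rows (A ** B) \<subseteq> vec.span (rows B)"
    by (auto simp: rows_def)
  then show ?thesis
    unfolding row_rank_def_gen by (rule vec.dim_mono)
qed

lemma rank_matrix_mul_le_left: "rank (A ** B) \<le> rank (A :: 'a::field^'n^'m)"
proof -
  have "rows (A ** B) = (\<lambda>x. transpose B *v x) ` rows A"
    by (auto simp: rows_def row_def vec_eq_iff matrix_matrix_mult_def vector_matrix_mult_def)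
  then show ?thesis
    unfolding row_rank_def_gen by (metis vec.dim_image_le matrix_vector_mul_linear_gen)
qed

lemma rank_invertible_conj:
  fixes P :: "'a::field^'m^'m" and Q :: "'a^'n^'n"
  assumes "P' ** P = mat 1" and "Q ** Q' = mat 1"
  shows "rank (P ** D ** Q) = rank D"
proof (rule antisym)
  show "rank (P ** D ** Q) \<le> rank D"
    by (rule order_trans[OF rank_matrix_mul_le_left rank_matrix_mul_le_right])
  have "D = P' ** (P ** D ** Q) ** Q'"
    using assms by (simp add: matrix_mul_assoc flip: matrix_mul_assoc[of _ Q Q'])
  then show "rank D \<le> rank (P ** D ** Q)"
    using rank_matrix_mul_le_left rank_matrix_mul_le_right order_trans by metis
qed

definition diag_mat :: "('n \<Rightarrow> 'a::zero) \<Rightarrow> 'a^'n^'n" where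
  "diag_mat d = (\<chi> i j. if i = j then d i else 0)"

lemma diag_mat_nth [simp]: "diag_mat d $ i $ j = (if i = j then d i else 0)"
  by (simp add: diag_mat_def)

lemma diag_mat_mul_nth: "(diag_mat d ** M) $ i $ j = d i * M $ i $ j"
  unfolding matrix_matrix_mult_def by (simp add: if_distrib if_distribR cong: if_cong)

lemma matrix_mul_diag_mat_nth: "(M ** diag_mat d) $ i $ j = M $ i $ j * d j"
  unfolding matrix_matrix_mult_def by (simp add: if_distrib if_distribR cong: if_cong)

lemma diag_mat_mul: "diag_mat d ** diag_mat e = diag_mat (\<lambda>i. d i * e i)"
  by (simp add: vec_eq_iff diag_mat_mul_nth)

lemma diag_mat_diff: "diag_mat (d :: _ \<Rightarrow> _ :: group_add) - diag_mat e = diag_mat (\<lambda>i. d i - e i)"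
  by (simp add: vec_eq_iff)

lemma cadj_diag_mat: "cadj (diag_mat d) = diag_mat (\<lambda>i. cnj (d i))"
  by (simp add: vec_eq_iff)

lemma rank_diag_mat: "rank (diag_mat d :: 'a::field^'n^'n) = card {i. d i \<noteq> 0}"
proof -
  let ?T = "{i. d i \<noteq> 0}" and ?e = "\<lambda>i. axis i 1 :: 'a^'n"
  have row: "row i (diag_mat d) = d i *s ?e i" for i
    by (simp add: vec_eq_iff row_def axis_def)
  have "d i *s ?e i \<in> vec.span (?e ` ?T)" for i
    by (cases "d i = 0") (auto intro: vec.span_scale vec.span_base vec.span_zero)
  then have "rows (diag_mat d) \<subseteq> vec.span (?e ` ?T)"
    by (auto simp: rows_def row)
  moreover have "?e ` ?T \<subseteq> vec.span (rows (diag_mat d))"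
  proof
    fix x assume "x \<in> ?e ` ?T"
    then obtain i where "d i \<noteq> 0" "x = inverse (d i) *s row i (diag_mat d)"
      by (auto simp: row)
    then show "x \<in> vec.span (rows (diag_mat d))"
      by (auto simp: rows_def intro: vec.span_scale vec.span_base)
  qed
  ultimately have "vec.span (rows (diag_mat d)) = vec.span (?e ` ?T)"
    using vec.span_subspace vec.subspace_span vec.span_mono vec.span_span by metis
  moreover have "vec.independent (?e ` ?T)"
    by (rule vec.independent_mono[OF independent_cart_basis]) (auto simp: cart_basis_def)
  moreover have "inj_on ?e ?T"
    by (auto intro: inj_onI simp: axis_eq_axis)
  ultimately show ?thesis
    unfolding row_rank_def_gen
    by (metis vec.dim_span vec.dim_eq_card_independent card_image)
qed

definition unitary :: "complex^'n^'n \<Rightarrow> bool" where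
  "unitary U \<longleftrightarrow> cadj U ** U = mat 1"

lemma unitary_right: "unitary U \<Longrightarrow> U ** cadj U = mat 1"
  by (simp add: unitary_def matrix_left_right_inverse)

definition udiag :: "complex^'n^'n \<Rightarrow> ('n \<Rightarrow> complex) \<Rightarrow> complex^'n^'n" where
  "udiag U d = U ** diag_mat d ** cadj U"

lemma udiag_mul: "unitary U \<Longrightarrow> udiag U d ** udiag U e = udiag U (\<lambda>i. d i * e i)"
proof -
  assume "unitary U"
  then have "udiag U d ** udiag U e = U ** diag_mat d ** (cadj U ** U) ** diag_mat e ** cadj U"
    by (simp add: udiag_def matrix_mul_assoc)
  with \<open>unitary U\<close> show ?thesis
    by (simp add: unitary_def udiag_def diag_mat_mul flip: matrix_mul_assoc)
qed

lemma cadj_udiag: "cadj (udiag U d) = udiag U (\<lambda>i. cnj (d i))"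
  unfolding udiag_def by (simp add: cadj_matrix_mul cadj_diag_mat matrix_mul_assoc)

lemma udiag_diff: "udiag U d - udiag U e = udiag U (\<lambda>i. d i - e i)"
  unfolding udiag_def by (simp add: matrix_mul_diff_left matrix_mul_diff_right flip: diag_mat_diff)

lemma udiag_0: "udiag U (\<lambda>i. 0) = 0"
  unfolding udiag_def by (simp add: vec_eq_iff matrix_matrix_mult_def)

lemma mproj_udiag:
  assumes "unitary U" and "\<And>i. d i = 0 \<or> d i = 1"
  shows "mproj (udiag U d)"
proof -
  have "(\<lambda>i. cnj (d i)) = d"
  proof
    show "cnj (d i) = d i" for i using assms(2)[of i] by auto
  qed
  moreover have "(\<lambda>i. d i * d i) = d"
  proof
    show "d i * d i = d i" for i using assms(2)[of i] by auto
  qed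
  ultimately show ?thesis
    unfolding mproj_def by (simp add: cadj_udiag udiag_mul[OF assms(1)])
qed

lemma rank_udiag: "unitary U \<Longrightarrow> rank (udiag U d) = card {i. d i \<noteq> 0}"
  unfolding udiag_def
  by (simp add: rank_invertible_conj[where P' = "cadj U" and Q' = U] unitary_def unitary_right
      rank_diag_mat)

lemma udiag_mul_eq_self:
  assumes U: "unitary U" and eA: "udiag U e ** A = A" and d: "\<And>i. e i = 1 \<Longrightarrow> d i = 1"
  shows "udiag U d ** A = A"
proof -
  let ?Y = "cadj U ** A"
  have "diag_mat e ** ?Y = cadj U ** (udiag U e ** A)"
    using U by (simp add: udiag_def unitary_def matrix_mul_assoc)
  then have "e i * ?Y $ i $ j = ?Y $ i $ j" for i j
    using eA by (metis diag_mat_mul_nth)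
  then have "d i * ?Y $ i $ j = ?Y $ i $ j" for i j
    using d by (metis mult_cancel_right2)
  then have "diag_mat d ** ?Y = ?Y"
    by (simp add: vec_eq_iff diag_mat_mul_nth)
  then show ?thesis
    using unitary_right[OF U] by (metis matrix_mul_assoc matrix_mul_lid udiag_def)
qed

lemma mul_udiag_eq_self:
  assumes U: "unitary U" and Ce: "C ** udiag U e = udiag U e" and d: "\<And>i. e i = 0 \<Longrightarrow> d i = 0"
  shows "C ** udiag U d = udiag U d"
proof -
  have "(\<lambda>i. e i * (d i / e i)) = d"
  proof
    show "e i * (d i / e i) = d i" for i
      using d[of i] by (cases "e i = 0") auto
  qed
  then have "udiag U d = udiag U e ** udiag U (\<lambda>i. d i / e i)"
    by (simp add: udiag_mul[OF U])
  then show ?thesis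
    by (simp add: matrix_mul_assoc Ce)
qed

section \<open>The Frobenius norm\<close>

lemma norm_vec_sq: "(norm (v::'a::real_normed_vector^'n))\<^sup>2 = (\<Sum>i\<in>UNIV. (norm (v $ i))\<^sup>2)"
  by (simp add: norm_vec_def L2_set_def sum_nonneg)

lemma norm_le_componentwise:
  fixes x y :: "'a::real_normed_vector^'n"
  assumes "\<And>i. norm (x $ i) \<le> L * norm (y $ i)" and "0 \<le> L"
  shows "norm x \<le> L * norm y"
proof -
  have "(norm (x $ i))\<^sup>2 \<le> (L * norm (y $ i))\<^sup>2" for i
    using assms(1) norm_ge_zero by (rule power_mono)
  then have "(norm x)\<^sup>2 \<le> (L * norm y)\<^sup>2"
    unfolding norm_vec_sq power_mult_distrib sum_distrib_left
    by (intro sum_mono) (simp add: power_mult_distrib)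
  then show ?thesis
    by (rule power2_le_imp_le) (use assms(2) in simp)
qed

lemma norm_scalar_mult: "norm (c *s (v::complex^'n)) = cmod c * norm v"
proof -
  have "(norm (c *s v))\<^sup>2 = (cmod c * norm v)\<^sup>2"
    by (simp add: norm_vec_sq power_mult_distrib norm_mult sum_distrib_left)
  then show ?thesis
    by simp
qed

lemma norm_sq_eq_trace: "complex_of_real ((norm (M::complex^'n^'m))\<^sup>2) = trace (cadj M ** M)"
proof -
  have "complex_of_real ((norm M)\<^sup>2) = (\<Sum>i\<in>UNIV. \<Sum>j\<in>UNIV. cnj (M $ i $ j) * M $ i $ j)"
    by (simp add: norm_vec_sq complex_norm_square mult.commute del: of_real_power)
  also have "\<dots> = trace (cadj M ** M)"
    unfolding trace_def matrix_matrix_mult_def by (simp add: cadj_def) (rule sum.swap)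
  finally show ?thesis .
qed

lemma norm_eq_iff_of_real_norm_sq_eq:
  "norm x = norm y \<longleftrightarrow> complex_of_real ((norm x)\<^sup>2) = complex_of_real ((norm y)\<^sup>2)"
  by (simp only: of_real_eq_iff) simp

lemma norm_cadj: "norm (cadj M) = norm (M::complex^'n^'m)"
  unfolding norm_eq_iff_of_real_norm_sq_eq norm_sq_eq_trace cadj_cadj by (rule trace_mul_sym)

lemma norm_isometry_mul:
  assumes "cadj V ** V = mat 1"
  shows "norm (V ** (M::complex^'n^'m)) = norm M"
proof -
  have "cadj (V ** M) ** (V ** M) = cadj M ** (cadj V ** V) ** M"
    by (simp add: cadj_matrix_mul matrix_mul_assoc)
  then show ?thesis
    unfolding norm_eq_iff_of_real_norm_sq_eq norm_sq_eq_trace by (simp add: assms)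
qed

lemma norm_unitary_conj:
  assumes "unitary U" and "unitary V"
  shows "norm (cadj V ** M ** U) = norm M"
proof -
  have "norm (cadj V ** M ** U) = norm (M ** U)"
    using assms(2) by (simp add: norm_isometry_mul unitary_right flip: matrix_mul_assoc)
  also have "\<dots> = norm (cadj U ** cadj M)"
    by (simp add: cadj_matrix_mul flip: norm_cadj[of "M ** U"])
  also have "\<dots> = norm M"
    using assms(1) by (simp add: norm_isometry_mul unitary_right norm_cadj)
  finally show ?thesis .
qed

lemma norm_udiag: "unitary U \<Longrightarrow> norm (udiag U d) = norm (diag_mat d)"
  using norm_unitary_conj[of "cadj U" "cadj U" "diag_mat d"]
  by (simp add: udiag_def unitary_def unitary_right)

lemma norm_diag_mat_sq: "(norm (diag_mat d))\<^sup>2 = (\<Sum>i\<in>UNIV. (cmod (d i))\<^sup>2)"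
proof -
  have "(\<Sum>j\<in>UNIV. (cmod (diag_mat d $ i $ j))\<^sup>2) = (\<Sum>j\<in>UNIV. if i = j then (cmod (d i))\<^sup>2 else 0)" for i
    by (rule sum.cong) auto
  then have "(\<Sum>j\<in>UNIV. (cmod (diag_mat d $ i $ j))\<^sup>2) = (cmod (d i))\<^sup>2" for i
    by simp
  then show ?thesis
    by (simp add: norm_vec_sq)
qed

lemma norm_le_norm_diag_mat: "cmod (d i) \<le> norm (diag_mat d)"
proof -
  have "cmod (d i) = norm (diag_mat d $ i $ i)"
    by simp
  also have "\<dots> \<le> norm (diag_mat d $ i)"
    by (rule Finite_Cartesian_Product.norm_nth_le)
  also have "\<dots> \<le> norm (diag_mat d)"
    by (rule Finite_Cartesian_Product.norm_nth_le)
  finally show ?thesis .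
qed

section \<open>The spectral theorem for Hermitian matrices\<close>

definition cinner :: "complex^'n \<Rightarrow> complex^'n \<Rightarrow> complex" where
  "cinner v w = (\<Sum>i\<in>UNIV. v $ i * cnj (w $ i))"

lemma cinner_zero_left [simp]: "cinner 0 w = 0"
  by (simp add: cinner_def)

lemma cinner_zero_right [simp]: "cinner v 0 = 0"
  by (simp add: cinner_def)

lemma cinner_add_left: "cinner (u + v) w = cinner u w + cinner v w"
  by (simp add: cinner_def algebra_simps sum.distrib)

lemma cinner_add_right: "cinner u (v + w) = cinner u v + cinner u w"
  by (simp add: cinner_def algebra_simps sum.distrib)

lemma cinner_diff_left: "cinner (u - v) w = cinner u w - cinner v w"
  by (simp add: cinner_def algebra_simps sum_subtractf)

lemma cinner_diff_right: "cinner u (v - w) = cinner u v - cinner u w"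
  by (simp add: cinner_def algebra_simps sum_subtractf)

lemma cinner_scale_left: "cinner (c *s v) w = c * cinner v w"
  by (simp add: cinner_def algebra_simps sum_distrib_left)

lemma cinner_scale_right: "cinner v (c *s w) = cnj c * cinner v w"
  by (simp add: cinner_def algebra_simps sum_distrib_left)

lemma cinner_sum_left: "cinner (\<Sum>j\<in>S. f j) w = (\<Sum>j\<in>S. cinner (f j) w)"
  by (induct S rule: infinite_finite_induct) (simp_all add: cinner_add_left)

lemma cinner_commute: "cinner w v = cnj (cinner v w)"
  by (simp add: cinner_def mult.commute)

lemma cinner_self: "cinner v v = complex_of_real ((norm v)\<^sup>2)"
  by (simp add: cinner_def norm_vec_sq complex_norm_square del: of_real_power)

lemma cinner_matrix_vector_mult: "cinner (A *v v) w = cinner v (cadj A *v w)"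
  unfolding cinner_def matrix_vector_mult_def
  by (simp add: sum_distrib_left sum_distrib_right mult_ac) (rule sum.swap)

lemma cinner_hermitian: "cadj B = B \<Longrightarrow> cinner (B *v v) w = cinner v (B *v w)"
  by (metis cinner_matrix_vector_mult)

lemma subspace_cinner_orthogonal: "vec.subspace {w. \<forall>j\<in>S. cinner w (v j) = 0}"
  by (auto simp: vec.subspace_def cinner_add_left cinner_scale_left)

lemma closed_cinner_orthogonal: "closed {w. \<forall>j\<in>S. cinner w (v j) = 0}"
  unfolding Collect_ball_eq cinner_def by (intro closed_INT ballI closed_Collect_eq continuous_intros)

definition corthonormal :: "'i set \<Rightarrow> ('i \<Rightarrow> complex^'n) \<Rightarrow> bool" where
  "corthonormal S v \<longleftrightarrow> (\<forall>j\<in>S. \<forall>k\<in>S. cinner (v j) (v k) = (if j = k then 1 else 0))"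

lemma linear_le_quadratic_imp_zero:
  fixes a c :: real
  assumes "\<And>t. a * t \<le> c * t\<^sup>2"
  shows "a = 0"
proof (rule ccontr)
  assume "a \<noteq> 0"
  define t where "t = a / (2 * (\<bar>c\<bar> + 1))"
  have "a = 2 * (\<bar>c\<bar> + 1) * t"
    by (simp add: t_def add_pos_nonneg)
  then have "a * t = 2 * \<bar>c\<bar> * t\<^sup>2 + 2 * t\<^sup>2"
    by (simp add: algebra_simps power2_eq_square)
  moreover have "t\<^sup>2 > 0"
    using \<open>a \<noteq> 0\<close> by (simp add: t_def add_pos_nonneg)
  moreover have "c * t\<^sup>2 \<le> \<bar>c\<bar> * t\<^sup>2" and "0 \<le> \<bar>c\<bar> * t\<^sup>2"
    by (simp_all add: mult_right_mono)
  ultimately show False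
    using assms[of t] by linarith
qed

lemma rayleigh_quotient_attains_max:
  fixes B :: "complex^'n^'n"
  assumes W: "vec.subspace W" "closed W" and w1: "w1 \<in> W" "w1 \<noteq> 0"
  obtains w where "w \<in> W" "norm w = 1"
    "\<And>u. u \<in> W \<Longrightarrow> Re (cinner (B *v u) u) \<le> Re (cinner (B *v w) w) * (norm u)\<^sup>2"
proof -
  let ?q = "\<lambda>w. Re (cinner (B *v w) w)"
  let ?K = "W \<inter> sphere 0 1"
  have "compact ?K"
    using W(2) by (intro closed_Int_compact compact_sphere)
  moreover have "complex_of_real (1 / norm w1) *s w1 \<in> ?K"
    using w1 vec.subspace_scale[OF W(1)] by (simp add: norm_scalar_mult norm_divide)
  then have "?K \<noteq> {}"
    by blast
  moreover have "continuous_on ?K ?q"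
    unfolding cinner_def matrix_vector_mult_def by (intro continuous_intros)
  ultimately have "\<exists>w\<in>?K. \<forall>y\<in>?K. ?q y \<le> ?q w"
    by (rule continuous_attains_sup)
  then obtain w where w: "w \<in> ?K" and max: "\<And>y. y \<in> ?K \<Longrightarrow> ?q y \<le> ?q w"
    by blast
  have "?q u \<le> ?q w * (norm u)\<^sup>2" if "u \<in> W" for u
  proof (cases "u = 0")
    case False
    define c where "c = complex_of_real (1 / norm u)"
    have "c *s u \<in> ?K"
      using that False vec.subspace_scale[OF W(1)] by (simp add: c_def norm_scalar_mult norm_divide)
    then have "?q (c *s u) \<le> ?q w"
      by (rule max)
    moreover have "?q (c *s u) = ?q u / (norm u)\<^sup>2"
      by (simp add: c_def vector_scalar_commute cinner_scale_left cinner_scale_right power2_eq_square)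
    ultimately show ?thesis
      using False by (simp add: pos_divide_le_eq)
  qed simp
  with w show ?thesis
    by (intro that) auto
qed

text \<open>
  With \<open>M = B - l\<close>, the form \<open>Re \<langle>M u, u\<rangle>\<close> is \<open>\<le> 0\<close> on \<open>W\<close> and vanishes at \<open>w\<close>; along the line
  \<open>w + t g\<close> with \<open>g = M w\<close> it equals \<open>2 t \<parallel>g\<parallel>\<^sup>2 + O(t\<^sup>2)\<close>, which forces \<open>g = 0\<close>.
\<close>

lemma rayleigh_maximizer_is_eigenvector:
  fixes B :: "complex^'n^'n"
  assumes herm: "cadj B = B" and W: "vec.subspace W" and inv: "\<And>u. u \<in> W \<Longrightarrow> B *v u \<in> W"
    and bound: "\<And>u. u \<in> W \<Longrightarrow> Re (cinner (B *v u) u) \<le> l * (norm u)\<^sup>2"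
    and w: "w \<in> W" "Re (cinner (B *v w) w) = l * (norm w)\<^sup>2"
  shows "B *v w = complex_of_real l *s w"
proof -
  define M where "M u = B *v u - complex_of_real l *s u" for u
  have MW: "M u \<in> W" if "u \<in> W" for u
    using that by (simp add: M_def inv vec.subspace_diff[OF W] vec.subspace_scale[OF W])
  have M_hermitian: "cinner (M u) v = cinner u (M v)" for u v
    by (simp add: M_def cinner_diff_left cinner_diff_right cinner_scale_left cinner_scale_right
        cinner_hermitian[OF herm])
  have Q: "Re (cinner (M u) u) = Re (cinner (B *v u) u) - l * (norm u)\<^sup>2" for u
    by (simp add: M_def cinner_diff_left cinner_scale_left cinner_self)
  define g where "g = M w"
  have "g \<in> W"
    using MW w(1) by (simp add: g_def)
  have "2 * (norm g)\<^sup>2 * t \<le> - Re (cinner (M g) g) * t\<^sup>2" for t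
  proof -
    have "w + complex_of_real t *s g \<in> W"
      using w(1) \<open>g \<in> W\<close> vec.subspace_add[OF W] vec.subspace_scale[OF W] by blast
    then have "Re (cinner (M (w + complex_of_real t *s g)) (w + complex_of_real t *s g)) \<le> 0"
      using Q bound by simp
    moreover have "M (w + complex_of_real t *s g) = g + complex_of_real t *s M g"
      by (simp add: M_def g_def vec_eq_iff vector_scalar_commute algebra_simps)
    moreover have "cinner (g + complex_of_real t *s M g) (w + complex_of_real t *s g)
        = cinner g w + complex_of_real t * cinner g g + complex_of_real t * cinner (M g) w
          + complex_of_real (t * t) * cinner (M g) g"
      by (simp add: cinner_add_left cinner_add_right cinner_scale_left cinner_scale_right
          algebra_simps)
    moreover have "cinner (M g) w = cinner g g"
      by (simp add: M_hermitian g_def)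
    moreover have "Re (cinner g w) = 0"
      using Q[of w] w(2) by (simp add: g_def)
    ultimately show ?thesis
      by (simp add: cinner_self power2_eq_square del: of_real_power) (simp add: algebra_simps)
  qed
  then have "2 * (norm g)\<^sup>2 = 0"
    by (rule linear_le_quadratic_imp_zero)
  then show ?thesis
    by (simp add: g_def M_def)
qed

lemma hermitian_eigenvector_in_invariant_subspace:
  fixes B :: "complex^'n^'n"
  assumes "cadj B = B" and "vec.subspace W" and "closed W" and "\<And>u. u \<in> W \<Longrightarrow> B *v u \<in> W"
    and "w1 \<in> W" and "w1 \<noteq> 0"
  obtains w l where "w \<in> W" "norm w = 1" "B *v w = complex_of_real l *s w"
proof -
  obtain w where w: "w \<in> W" "norm w = 1"
    and w_max: "\<And>u. u \<in> W \<Longrightarrow> Re (cinner (B *v u) u) \<le> Re (cinner (B *v w) w) * (norm u)\<^sup>2"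
    using rayleigh_quotient_attains_max[OF assms(2,3,5,6)] by blast
  have "B *v w = complex_of_real (Re (cinner (B *v w) w)) *s w"
    by (rule rayleigh_maximizer_is_eigenvector[where W = W]) (use assms w w_max in auto)
  with w that show ?thesis
    by blast
qed

lemma exists_nonzero_orthogonal:
  fixes v :: "'i \<Rightarrow> complex^'n"
  assumes "corthonormal S v" and "finite S" and "card S < CARD('n)"
  obtains w where "w \<noteq> 0" "\<forall>j\<in>S. cinner w (v j) = 0"
proof (rule ccontr)
  assume no_w: "\<not> thesis"
  have "axis i 1 \<in> vec.span (v ` S)" for i
  proof -
    define e :: "complex^'n" where "e = axis i 1"
    define r where "r = e - (\<Sum>j\<in>S. cinner e (v j) *s v j)"
    have "cinner r (v k) = 0" if "k \<in> S" for k
    proof -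
      have "(\<Sum>j\<in>S. cinner e (v j) * cinner (v j) (v k)) = (\<Sum>j\<in>S. if j = k then cinner e (v k) else 0)"
        using assms(1) that by (intro sum.cong) (auto simp: corthonormal_def)
      then show ?thesis
        using assms(2) that by (simp add: r_def cinner_diff_left cinner_sum_left cinner_scale_left)
    qed
    then have "r = 0"
      using no_w that by blast
    then have "e = (\<Sum>j\<in>S. cinner e (v j) *s v j)"
      by (simp add: r_def)
    also have "\<dots> \<in> vec.span (v ` S)"
      by (intro vec.span_sum vec.span_scale vec.span_base) simp
    finally show ?thesis
      by (simp add: e_def)
  qed
  then have "cart_basis \<subseteq> vec.span (v ` S)"
    by (auto simp: cart_basis_def)
  then have "CARD('n) \<le> card (v ` S)"
    using vec.dim_le_card[of cart_basis "v ` S"] assms(2)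
    by (simp add: vec.dim_eq_card_independent independent_cart_basis card_cart_basis)
  also have "\<dots> \<le> card S"
    using assms(2) by (rule card_image_le)
  finally show False
    using assms(3) by simp
qed

lemma hermitian_orthonormal_eigenvectors:
  fixes B :: "complex^'n^'n" and S :: "'n set"
  assumes herm: "cadj B = B"
  shows "\<exists>v lam. corthonormal S v \<and> (\<forall>j\<in>S. B *v v j = complex_of_real (lam j) *s v j)"
proof (induct S rule: infinite_finite_induct)
  case (infinite S)
  then show ?case
    by simp
next
  case empty
  show ?case
    by (simp add: corthonormal_def)
next
  case (insert i S)
  then obtain v lam where orth: "corthonormal S v"
    and eig: "\<forall>j\<in>S. B *v v j = complex_of_real (lam j) *s v j"
    by blast
  define W where "W = {w. \<forall>j\<in>S. cinner w (v j) = 0}"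
  have "card S < CARD('n)"
    using insert card_mono[of UNIV "insert i S"] by simp
  then obtain w1 where w1: "w1 \<noteq> 0" "w1 \<in> W"
    using exists_nonzero_orthogonal[OF orth insert(1)] by (auto simp: W_def)
  have "vec.subspace W" and "closed W"
    unfolding W_def by (rule subspace_cinner_orthogonal closed_cinner_orthogonal)+
  moreover have "B *v u \<in> W" if "u \<in> W" for u
    using that eig by (simp add: W_def cinner_hermitian[OF herm] cinner_scale_right)
  ultimately obtain w l where w: "w \<in> W" "norm w = 1" "B *v w = complex_of_real l *s w"
    using hermitian_eigenvector_in_invariant_subspace[OF herm] w1 by metis
  have "cinner w (v k) = 0" "cinner (v k) w = 0" if "k \<in> S" for k
    using w(1) that by (auto simp: W_def cinner_commute[of "v k" w])
  moreover have "cinner w w = 1"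
    using w(2) by (simp add: cinner_self)
  ultimately have "corthonormal (insert i S) (v(i := w))"
    using orth insert(2) by (auto simp: corthonormal_def)
  moreover have "\<forall>j\<in>insert i S. B *v (v(i := w)) j = complex_of_real ((lam(i := l)) j) *s (v(i := w)) j"
    using eig w(3) insert(2) by auto
  ultimately show ?case
    by blast
qed

theorem hermitian_spectral_decomposition:
  fixes B :: "complex^'n^'n"
  assumes "cadj B = B"
  shows "\<exists>U lam. unitary U \<and> B = udiag U (\<lambda>i. complex_of_real (lam i))"
proof -
  obtain v :: "'n \<Rightarrow> complex^'n" and lam where orth: "corthonormal UNIV v"
    and eig: "\<forall>j. B *v v j = complex_of_real (lam j) *s v j"
    using hermitian_orthonormal_eigenvectors[OF assms, of UNIV] by auto
  define U :: "complex^'n^'n" where "U = (\<chi> r c. v c $ r)"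
  have "(cadj U ** U) $ j $ k = cinner (v k) (v j)" for j k
    by (simp add: U_def matrix_matrix_mult_def cinner_def mult.commute)
  then have U: "unitary U"
    using orth by (simp add: unitary_def corthonormal_def vec_eq_iff mat_def)
  have "(B ** U) $ r $ c = (B *v v c) $ r" for r c
    by (simp add: U_def matrix_matrix_mult_def matrix_vector_mult_def)
  then have "B ** U = U ** diag_mat (\<lambda>i. complex_of_real (lam i))"
    using eig by (simp add: vec_eq_iff matrix_mul_diag_mat_nth U_def mult.commute)
  then have "B = udiag U (\<lambda>i. complex_of_real (lam i))"
    using unitary_right[OF U] by (metis matrix_mul_assoc matrix_mul_rid udiag_def)
  with U show ?thesis
    by blast
qed

section \<open>Functions of Hermitian matrices\<close>

text \<open>A chosen eigendecomposition; meaningful only for Hermitian \<open>B\<close>.\<close>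

definition eig_basis :: "complex^'n^'n \<Rightarrow> complex^'n^'n" where
  "eig_basis B = (SOME U. \<exists>lam. unitary U \<and> B = udiag U (\<lambda>i. complex_of_real (lam i)))"

definition eig_val :: "complex^'n^'n \<Rightarrow> 'n \<Rightarrow> real" where
  "eig_val B = (SOME lam. B = udiag (eig_basis B) (\<lambda>i. complex_of_real (lam i)))"

lemma
  assumes "cadj B = B"
  shows unitary_eig_basis: "unitary (eig_basis B)"
    and udiag_eig_val: "udiag (eig_basis B) (\<lambda>i. complex_of_real (eig_val B i)) = B"
proof -
  have ex: "\<exists>lam. unitary (eig_basis B) \<and> B = udiag (eig_basis B) (\<lambda>i. complex_of_real (lam i))"
    unfolding eig_basis_def by (rule someI_ex) (rule hermitian_spectral_decomposition[OF assms])
  then show "unitary (eig_basis B)"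
    by blast
  from ex have "\<exists>lam. B = udiag (eig_basis B) (\<lambda>i. complex_of_real (lam i))"
    by blast
  then have "B = udiag (eig_basis B) (\<lambda>i. complex_of_real (eig_val B i))"
    unfolding eig_val_def by (rule someI_ex)
  then show "udiag (eig_basis B) (\<lambda>i. complex_of_real (eig_val B i)) = B"
    by simp
qed

definition matfun :: "(real \<Rightarrow> real) \<Rightarrow> complex^'n^'n \<Rightarrow> complex^'n^'n" where
  "matfun f B = udiag (eig_basis B) (\<lambda>i. complex_of_real (f (eig_val B i)))"

lemma unitary_conj_udiag_diff_nth:
  assumes "unitary U" and "unitary V"
  shows "(cadj V ** (udiag V e - udiag U d) ** U) $ i $ j = (e i - d j) * (cadj V ** U) $ i $ j"
proof -
  have "cadj V ** udiag V e ** U = (cadj V ** V) ** diag_mat e ** (cadj V ** U)"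
    and "cadj V ** udiag U d ** U = (cadj V ** U) ** diag_mat d ** (cadj U ** U)"
    by (simp_all add: udiag_def matrix_mul_assoc)
  then have eq: "cadj V ** (udiag V e - udiag U d) ** U
      = diag_mat e ** (cadj V ** U) - (cadj V ** U) ** diag_mat d"
    using assms by (simp add: matrix_mul_diff_left matrix_mul_diff_right unitary_def)
  show ?thesis
    unfolding eq by (simp add: diag_mat_mul_nth matrix_mul_diag_mat_nth algebra_simps)
qed

text \<open>
  Conjugated by the two eigenbases, \<open>f(B') - f(B)\<close> has entries \<open>(f \<mu>\<^sub>i - f \<lambda>\<^sub>j) W\<^sub>i\<^sub>j\<close> and
  \<open>B' - B\<close> has entries \<open>(\<mu>\<^sub>i - \<lambda>\<^sub>j) W\<^sub>i\<^sub>j\<close>, with \<open>W = V\<^sup>* U\<close>; so the Lipschitz bound holds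
  entrywise.
\<close>

lemma norm_udiag_diff_lipschitz:
  assumes "unitary U" and "unitary V" and f: "L-lipschitz_on UNIV f"
  shows "norm (udiag V (\<lambda>i. complex_of_real (f (m i))) - udiag U (\<lambda>i. complex_of_real (f (l i))))
    \<le> L * norm (udiag V (\<lambda>i. complex_of_real (m i)) - udiag U (\<lambda>i. complex_of_real (l i)))"
    (is "norm ?F \<le> L * norm ?E")
proof -
  have "cmod ((cadj V ** ?F ** U) $ i $ j) \<le> L * cmod ((cadj V ** ?E ** U) $ i $ j)" for i j
  proof -
    have "\<bar>f (m i) - f (l j)\<bar> \<le> L * \<bar>m i - l j\<bar>"
      using lipschitz_onD[OF f] by (simp add: dist_real_def)
    then have "\<bar>f (m i) - f (l j)\<bar> * cmod ((cadj V ** U) $ i $ j)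
        \<le> L * \<bar>m i - l j\<bar> * cmod ((cadj V ** U) $ i $ j)"
      by (rule mult_right_mono) simp
    then show ?thesis
      by (simp add: unitary_conj_udiag_diff_nth[OF assms(1,2)] norm_mult mult.assoc
          flip: of_real_diff)
  qed
  then have "norm (cadj V ** ?F ** U) \<le> L * norm (cadj V ** ?E ** U)"
    using lipschitz_on_nonneg[OF f] by (intro norm_le_componentwise) auto
  then show ?thesis
    by (simp add: norm_unitary_conj[OF assms(1,2)])
qed

lemma matfun_lipschitz_on:
  assumes "L-lipschitz_on UNIV f"
  shows "L-lipschitz_on {B :: complex^'n^'n. cadj B = B} (matfun f)"
proof (rule lipschitz_onI)
  show "0 \<le> L"
    using assms by (rule lipschitz_on_nonneg)
  fix B B' :: "complex^'n^'n"
  assume "B \<in> {B. cadj B = B}" and "B' \<in> {B. cadj B = B}"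
  then have B: "cadj B = B" and B': "cadj B' = B'"
    by simp_all
  have "norm (matfun f B - matfun f B') \<le> L * norm (B - B')"
    using norm_udiag_diff_lipschitz[OF unitary_eig_basis[OF B'] unitary_eig_basis[OF B] assms,
        of "eig_val B" "eig_val B'"]
    unfolding matfun_def udiag_eig_val[OF B] udiag_eig_val[OF B'] .
  then show "dist (matfun f B) (matfun f B') \<le> L * dist B B'"
    by (simp add: dist_norm)
qed

lemma continuous_map_matfun:
  assumes "L-lipschitz_on UNIV f" and "continuous_map X euclidean b"
    and "\<And>x. x \<in> topspace X \<Longrightarrow> cadj (b x) = b x"
  shows "continuous_map X euclidean (\<lambda>x. matfun f (b x))"
proof -
  have "continuous_map X (top_of_set {B. cadj B = B}) b"
    using assms(2,3) by (auto intro: continuous_map_into_subtopology)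
  moreover have "continuous_map (top_of_set {B. cadj B = B}) euclidean (matfun f)"
    using lipschitz_on_continuous_on[OF matfun_lipschitz_on[OF assms(1)]]
    by simp
  ultimately have "continuous_map X euclidean (matfun f \<circ> b)"
    by (rule continuous_map_compose)
  then show ?thesis
    by (simp add: comp_def)
qed

definition ramp :: "real \<Rightarrow> real \<Rightarrow> real \<Rightarrow> real" where
  "ramp s \<delta> t = max 0 (min 1 ((t - s) / \<delta>))"

definition bump :: "real \<Rightarrow> real \<Rightarrow> real \<Rightarrow> real" where
  "bump s \<delta> t = max 0 (1 - \<bar>t - s\<bar> / \<delta>)"

lemma lipschitz_on_ramp: "0 < \<delta> \<Longrightarrow> (1 / \<delta>)-lipschitz_on UNIV (ramp s \<delta>)"
proof (rule lipschitz_onI)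
  fix x y :: real
  assume "0 < \<delta>"
  have "\<bar>ramp s \<delta> x - ramp s \<delta> y\<bar> \<le> \<bar>(x - s) / \<delta> - (y - s) / \<delta>\<bar>"
    unfolding ramp_def max_def min_def by auto
  also have "\<dots> = 1 / \<delta> * \<bar>x - y\<bar>"
    using \<open>0 < \<delta>\<close> by (simp add: field_simps)
  finally show "dist (ramp s \<delta> x) (ramp s \<delta> y) \<le> 1 / \<delta> * dist x y"
    by (simp add: dist_real_def)
qed simp

lemma lipschitz_on_bump: "0 < \<delta> \<Longrightarrow> (1 / \<delta>)-lipschitz_on UNIV (bump s \<delta>)"
proof (rule lipschitz_onI)
  fix x y :: real
  assume "0 < \<delta>"
  have "\<bar>bump s \<delta> x - bump s \<delta> y\<bar> \<le> \<bar>\<bar>x - s\<bar> / \<delta> - \<bar>y - s\<bar> / \<delta>\<bar>"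
    unfolding bump_def max_def by auto
  also have "\<dots> = 1 / \<delta> * \<bar>\<bar>x - s\<bar> - \<bar>y - s\<bar>\<bar>"
    using \<open>0 < \<delta>\<close> by (simp add: field_simps)
  also have "\<dots> \<le> 1 / \<delta> * \<bar>x - y\<bar>"
    using \<open>0 < \<delta>\<close> by (intro mult_left_mono) auto
  finally show "dist (bump s \<delta> x) (bump s \<delta> y) \<le> 1 / \<delta> * dist x y"
    by (simp add: dist_real_def)
qed simp

section \<open>Spectral projections\<close>

definition spec_proj :: "complex^'n^'n \<Rightarrow> real \<Rightarrow> complex^'n^'n" where
  "spec_proj B s = udiag (eig_basis B) (\<lambda>i. if s < eig_val B i then 1 else 0)"

lemma mproj_spec_proj: "cadj B = B \<Longrightarrow> mproj (spec_proj B s)"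
  unfolding spec_proj_def by (rule mproj_udiag[OF unitary_eig_basis]) auto

lemma rank_spec_proj: "cadj B = B \<Longrightarrow> rank (spec_proj B s) = card {i. s < eig_val B i}"
  unfolding spec_proj_def by (simp add: rank_udiag[OF unitary_eig_basis])

lemma spec_proj_mul_eq_self:
  assumes "cadj B = B" and "s < 1" and "B ** A = A"
  shows "spec_proj B s ** A = A"
  unfolding spec_proj_def
  by (rule udiag_mul_eq_self[OF unitary_eig_basis[OF assms(1)], where e = "\<lambda>i. eig_val B i"])
    (use assms in \<open>auto simp: udiag_eig_val\<close>)

lemma mul_spec_proj_eq_self:
  assumes "cadj B = B" and "0 \<le> s" and "C ** B = B"
  shows "C ** spec_proj B s = spec_proj B s"
  unfolding spec_proj_def
  by (rule mul_udiag_eq_self[OF unitary_eig_basis[OF assms(1)], where e = "\<lambda>i. eig_val B i"])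
    (use assms in \<open>auto simp: udiag_eig_val\<close>)

lemma mle_spec_proj:
  assumes "cadj B = B" and "{i. s < eig_val B i} \<subseteq> {i. t < eig_val B i}"
  shows "mle (spec_proj B s) (spec_proj B t)"
proof -
  have "spec_proj B t - spec_proj B s
      = udiag (eig_basis B) (\<lambda>i. (if t < eig_val B i then 1 else 0) - (if s < eig_val B i then 1 else 0))"
    by (simp add: spec_proj_def udiag_diff)
  also have "mproj \<dots>"
    using assms(2) by (intro mproj_udiag[OF unitary_eig_basis[OF assms(1)]]) auto
  finally show ?thesis
    unfolding mle_def by (rule mproj_mpos)
qed

lemma norm_spec_proj_sq: "cadj B = B \<Longrightarrow> (norm (spec_proj B s))\<^sup>2 = card {i. s < eig_val B i}"
proof -
  assume "cadj B = B"
  have "(norm (spec_proj B s))\<^sup>2 = (\<Sum>i\<in>UNIV. if s < eig_val B i then 1 else 0)"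
    unfolding spec_proj_def norm_udiag[OF unitary_eig_basis[OF \<open>cadj B = B\<close>]] norm_diag_mat_sq
    by (intro sum.cong) auto
  then show ?thesis
    by (simp flip: sum.inter_filter)
qed

lemma spec_proj_eq_matfun_ramp:
  assumes "0 < \<delta>" and "\<And>i. \<delta> < \<bar>eig_val B i - s\<bar>"
  shows "spec_proj B s = matfun (ramp s \<delta>) B"
proof -
  have "complex_of_real (ramp s \<delta> (eig_val B i)) = (if s < eig_val B i then 1 else 0)" for i
    using assms(1) assms(2)[of i] by (auto simp: ramp_def field_simps)
  then show ?thesis
    by (simp add: spec_proj_def matfun_def)
qed

lemma norm_matfun_ramp_sq:
  assumes "cadj B = B" and "0 < \<delta>" and "\<And>i. \<delta> < \<bar>eig_val B i - s\<bar>"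
  shows "(norm (matfun (ramp s \<delta>) B))\<^sup>2 = card {i. s < eig_val B i}"
  by (simp add: assms norm_spec_proj_sq flip: spec_proj_eq_matfun_ramp[OF assms(2,3)])

lemma matfun_bump_eq_0:
  assumes "0 < \<delta>" and "\<And>i. \<delta> \<le> \<bar>eig_val B i - s\<bar>"
  shows "matfun (bump s \<delta>) B = 0"
proof -
  have "bump s \<delta> (eig_val B i) = 0" for i
    using assms(1) assms(2)[of i] by (simp add: bump_def field_simps)
  then show ?thesis
    by (simp add: matfun_def udiag_0)
qed

lemma gap_of_norm_matfun_bump:
  assumes "cadj B = B" and "0 < \<delta>" and "norm (matfun (bump s \<delta>) B) < 1 / 2"
  shows "\<delta> / 2 < \<bar>eig_val B i - s\<bar>"
proof -
  have "bump s \<delta> (eig_val B i) \<le> norm (matfun (bump s \<delta>) B)"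
    using norm_le_norm_diag_mat[of "\<lambda>i. complex_of_real (bump s \<delta> (eig_val B i))" i]
    by (simp add: matfun_def norm_udiag[OF unitary_eig_basis[OF assms(1)]] bump_def)
  then have "1 - \<bar>eig_val B i - s\<bar> / \<delta> < 1 / 2"
    using assms(3) by (simp add: bump_def)
  then show ?thesis
    using assms(2) by (simp add: field_simps)
qed

section \<open>Spectral cuts\<close>

lemma openin_continuous_map_of_local:
  assumes "\<And>x. x \<in> S \<Longrightarrow>
    \<exists>T g. openin X T \<and> x \<in> T \<and> T \<subseteq> S \<and> continuous_map X Y g \<and> (\<forall>y\<in>T. f y = g y)"
  shows "openin X S \<and> continuous_map (subtopology X S) Y f"
proof -
  obtain T g where Tg: "\<And>x. x \<in> S \<Longrightarrow> openin X (T x) \<and> x \<in> T x \<and> T x \<subseteq> S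
      \<and> continuous_map X Y (g x) \<and> (\<forall>y\<in>T x. f y = g x y)"
    using assms by metis
  have "openin X S"
    using Tg by (subst openin_subopen) blast
  moreover have "continuous_map (subtopology X S) Y f"
  proof (rule pasting_lemma[where I = S and T = T and f = g])
    show "openin (subtopology X S) (T x)" if "x \<in> S" for x
      using Tg[OF that] by (auto simp: openin_subtopology intro!: exI[of _ "T x"])
    show "continuous_map (subtopology (subtopology X S) (T x)) Y (g x)" if "x \<in> S" for x
      using Tg[OF that] by (simp add: continuous_map_from_subtopology subtopology_subtopology)
    show "g x y = g x' y" if "x \<in> S" "x' \<in> S" "y \<in> topspace (subtopology X S) \<inter> T x \<inter> T x'" for x x' y
      using Tg[OF that(1)] Tg[OF that(2)] that(3) by auto
    show "\<exists>j. j \<in> S \<and> y \<in> T j \<and> f y = g j y" if "y \<in> topspace (subtopology X S)" for y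
      using Tg that by auto
  qed
  ultimately show ?thesis ..
qed

lemma card_superlevel_le_imp_subset:
  fixes f :: "'i::finite \<Rightarrow> 'a::linorder"
  assumes "card {i. s < f i} \<le> card {i. t < f i}"
  shows "{i. s < f i} \<subseteq> {i. t < f i}"
proof (cases "t \<le> s")
  case False
  then have sub: "{i. t < f i} \<subseteq> {i. s < f i}"
    by auto
  then have "card {i. t < f i} \<le> card {i. s < f i}"
    by (intro card_mono) auto
  with assms have "card {i. t < f i} = card {i. s < f i}"
    by (rule antisym[rotated])
  with sub have "{i. t < f i} = {i. s < f i}"
    by (intro card_subset_eq) auto
  then show ?thesis
    by simp
qed auto

text \<open>
  The cut lies in \<open>(0,1)\<close> so that the projection above it keeps the eigenvalue 1 and discards
  the eigenvalue 0.
\<close>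

definition spectral_cut :: "complex^'n^'n \<Rightarrow> real \<Rightarrow> nat \<Rightarrow> bool" where
  "spectral_cut B s k \<longleftrightarrow> 0 < s \<and> s < 1 \<and> s \<notin> range (eig_val B) \<and> card {i. s < eig_val B i} = k"

definition has_spectral_cut :: "complex^'n^'n \<Rightarrow> nat \<Rightarrow> bool" where
  "has_spectral_cut B k \<longleftrightarrow> (\<exists>s. spectral_cut B s k)"

definition cut_proj :: "complex^'n^'n \<Rightarrow> nat \<Rightarrow> complex^'n^'n" where
  "cut_proj B k = spec_proj B (SOME s. spectral_cut B s k)"

lemma spectral_cut_superlevel_mono:
  assumes "spectral_cut B s k" and "spectral_cut B t l" and "k \<le> l"
  shows "{i. s < eig_val B i} \<subseteq> {i. t < eig_val B i}"
  using assms by (intro card_superlevel_le_imp_subset) (simp add: spectral_cut_def)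

lemma cut_proj_eq:
  assumes "spectral_cut B s k"
  shows "cut_proj B k = spec_proj B s"
proof -
  let ?t = "SOME s. spectral_cut B s k"
  have t: "spectral_cut B ?t k"
    using assms by (rule someI)
  have "{i. ?t < eig_val B i} = {i. s < eig_val B i}"
    using spectral_cut_superlevel_mono[OF t assms order.refl]
      spectral_cut_superlevel_mono[OF assms t order.refl] by (rule equalityI)
  then have "(?t < eig_val B i) = (s < eig_val B i)" for i
    by blast
  then show ?thesis
    by (simp add: cut_proj_def spec_proj_def)
qed

lemma ex_has_spectral_cut: "\<exists>k\<in>{..CARD('n)}. has_spectral_cut (B :: complex^'n^'n) k"
proof -
  have "infinite ({0<..<1::real} - range (eig_val B))"
    by (simp add: Diff_infinite_finite)
  then have "{0<..<1} - range (eig_val B) \<noteq> {}"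
    by (rule infinite_imp_nonempty)
  then obtain s where "s \<in> {0<..<1} - range (eig_val B)"
    by blast
  then have "has_spectral_cut B (card {i. s < eig_val B i})"
    by (auto simp: has_spectral_cut_def spectral_cut_def)
  moreover have "card {i. s < eig_val B i} \<le> CARD('n)"
    by (rule card_mono) auto
  ultimately show ?thesis
    by blast
qed

lemma cut_proj_properties:
  assumes "cadj B = B" and "has_spectral_cut B k" and "B ** A = A" and "C ** B = B"
  shows "mproj (cut_proj B k) \<and> rank (cut_proj B k) = k
    \<and> cut_proj B k ** A = A \<and> C ** cut_proj B k = cut_proj B k"
proof -
  obtain s where cut: "spectral_cut B s k"
    using assms(2) by (auto simp: has_spectral_cut_def)
  then have s: "0 \<le> s" "s < 1" and k: "card {i. s < eig_val B i} = k"
    by (simp_all add: spectral_cut_def)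
  show ?thesis
    unfolding cut_proj_eq[OF cut] rank_spec_proj[OF assms(1)] k
    by (intro conjI refl mproj_spec_proj spec_proj_mul_eq_self mul_spec_proj_eq_self assms s)
qed

lemma mle_cut_proj:
  assumes "cadj B = B" and "has_spectral_cut B k" and "has_spectral_cut B l" and "k \<le> l"
  shows "mle (cut_proj B k) (cut_proj B l)"
proof -
  obtain s t where "spectral_cut B s k" "spectral_cut B t l"
    using assms(2,3) by (auto simp: has_spectral_cut_def)
  then show ?thesis
    unfolding cut_proj_eq[OF \<open>spectral_cut B s k\<close>] cut_proj_eq[OF \<open>spectral_cut B t l\<close>]
    using assms(1) spectral_cut_superlevel_mono[OF _ _ assms(4)] by (intro mle_spec_proj)
qed

lemma spectral_cut_of_small_bump:
  assumes "cadj B = B" and "0 < \<delta>" and "0 < s" and "s < 1"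
    and "norm (matfun (bump s \<delta>) B) < 1 / 2" and "\<bar>(norm (matfun (ramp s (\<delta> / 2)) B))\<^sup>2 - k\<bar> < 1 / 2"
  shows "spectral_cut B s k \<and> (\<forall>i. \<delta> / 2 < \<bar>eig_val B i - s\<bar>)"
proof -
  have gap: "\<delta> / 2 < \<bar>eig_val B i - s\<bar>" for i
    using gap_of_norm_matfun_bump[OF assms(1,2,5)] .
  then have "(norm (matfun (ramp s (\<delta> / 2)) B))\<^sup>2 = card {i. s < eig_val B i}"
    using assms(1,2) by (simp add: norm_matfun_ramp_sq)
  then have "card {i. s < eig_val B i} = k"
    using assms(6) by linarith
  moreover have "s \<noteq> eig_val B i" for i
    using gap[of i] assms(2) by auto
  ultimately show ?thesis
    using assms(3,4) gap by (auto simp: spectral_cut_def)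
qed

text \<open>
  Near \<open>x0\<close> the bump of width \<open>\<delta>\<close> at \<open>s\<close> stays small, which keeps the eigenvalues \<open>\<delta>/2\<close>-away
  from \<open>s\<close>; the squared norm of the ramp then counts the eigenvalues above \<open>s\<close>, an integer
  that varies continuously.
\<close>

lemma spectral_cut_nhd:
  fixes b :: "'a \<Rightarrow> complex^'n^'n"
  assumes b: "continuous_map X euclidean b" and herm: "\<And>x. x \<in> topspace X \<Longrightarrow> cadj (b x) = b x"
    and x0: "x0 \<in> topspace X" and cut: "spectral_cut (b x0) s k"
  obtains T \<delta> where "openin X T" "x0 \<in> T" "0 < \<delta>"
    "\<And>x. x \<in> T \<Longrightarrow> spectral_cut (b x) s k \<and> (\<forall>i. \<delta> < \<bar>eig_val (b x) i - s\<bar>)"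
proof -
  obtain \<delta> where \<delta>: "0 < \<delta>" and avoid: "\<forall>t\<in>range (eig_val (b x0)). t \<noteq> s \<longrightarrow> \<delta> \<le> dist s t"
    using finite_set_avoid[of "range (eig_val (b x0))" s] by auto
  have gap0: "\<delta> \<le> \<bar>eig_val (b x0) i - s\<bar>" for i
    using avoid cut by (auto simp: spectral_cut_def dist_real_def abs_minus_commute)
  define H where "H x = matfun (bump s \<delta>) (b x)" for x
  define G where "G x = (norm (matfun (ramp s (\<delta> / 2)) (b x)))\<^sup>2" for x
  define T where "T = {x \<in> topspace X. H x \<in> ball 0 (1 / 2)} \<inter> {x \<in> topspace X. G x \<in> ball k (1 / 2)}"
  have T_iff: "x \<in> T \<longleftrightarrow> x \<in> topspace X \<and> norm (H x) < 1 / 2 \<and> \<bar>G x - k\<bar> < 1 / 2" for x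
    by (auto simp: T_def dist_norm dist_real_def abs_minus_commute)
  have "continuous_map X euclidean H"
    unfolding H_def using continuous_map_matfun[OF lipschitz_on_bump[OF \<delta>] b herm] .
  moreover have "continuous_map X euclidean G"
    unfolding G_def power2_eq_square
    by (intro continuous_intros continuous_map_matfun[OF lipschitz_on_ramp b herm]) (use \<delta> in simp_all)
  ultimately have "openin X T"
    unfolding T_def by (intro openin_Int openin_continuous_map_preimage) auto
  moreover have "x0 \<in> T"
  proof -
    have "\<delta> / 2 < \<bar>eig_val (b x0) i - s\<bar>" for i
      using \<delta> gap0[of i] by linarith
    then show ?thesis
      using x0 \<delta> gap0 cut
      by (simp add: T_iff H_def G_def matfun_bump_eq_0 norm_matfun_ramp_sq herm spectral_cut_def)
  qed
  moreover have "spectral_cut (b x) s k \<and> (\<forall>i. \<delta> / 2 < \<bar>eig_val (b x) i - s\<bar>)" if "x \<in> T" for x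
    using that cut \<delta> herm
    by (intro spectral_cut_of_small_bump) (auto simp: T_iff H_def G_def spectral_cut_def)
  ultimately show ?thesis
    using \<delta> by (intro that[of T "\<delta> / 2"]) auto
qed

lemma cut_proj_locally_continuous:
  fixes b :: "'a \<Rightarrow> complex^'n^'n"
  assumes b: "continuous_map X euclidean b" and herm: "\<And>x. x \<in> topspace X \<Longrightarrow> cadj (b x) = b x"
    and x0: "x0 \<in> {x \<in> topspace X. has_spectral_cut (b x) k}"
  shows "\<exists>T g. openin X T \<and> x0 \<in> T \<and> T \<subseteq> {x \<in> topspace X. has_spectral_cut (b x) k}
    \<and> continuous_map X euclidean g \<and> (\<forall>x\<in>T. cut_proj (b x) k = g x)"
proof -
  obtain s where "x0 \<in> topspace X" "spectral_cut (b x0) s k"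
    using x0 by (auto simp: has_spectral_cut_def)
  then obtain T \<delta> where T: "openin X T" "x0 \<in> T" "0 < \<delta>"
    and cut: "\<And>x. x \<in> T \<Longrightarrow> spectral_cut (b x) s k \<and> (\<forall>i. \<delta> < \<bar>eig_val (b x) i - s\<bar>)"
    using spectral_cut_nhd[OF b herm] by metis
  have "T \<subseteq> topspace X"
    using T(1) by (rule openin_subset)
  then have "T \<subseteq> {x \<in> topspace X. has_spectral_cut (b x) k}"
    using cut by (auto simp: has_spectral_cut_def)
  moreover have "continuous_map X euclidean (\<lambda>x. matfun (ramp s \<delta>) (b x))"
    by (rule continuous_map_matfun[OF lipschitz_on_ramp[OF T(3)] b herm])
  moreover have "cut_proj (b x) k = matfun (ramp s \<delta>) (b x)" if "x \<in> T" for x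
    using cut[OF that] cut_proj_eq spec_proj_eq_matfun_ramp[OF T(3)] by metis
  ultimately show ?thesis
    using T(1,2) by blast
qed

theorem lemma3p1:
  fixes X :: "'a topology"
    and a b c :: "'a \<Rightarrow> complex^'n::finite^'n"
  assumes "compact_space X" and "Hausdorff_space X"
    and "continuous_map X euclidean a"
    and "continuous_map X euclidean b"
    and "continuous_map X euclidean c"
    and "\<forall>x\<in>topspace X. mpos (a x) \<and> mpos (b x) \<and> mpos (c x)"
    and "\<forall>x\<in>topspace X. b x ** a x = a x"
    and "\<forall>x\<in>topspace X. c x ** b x = b x"
  shows "\<exists>(U :: nat \<Rightarrow> 'a set) (p :: nat \<Rightarrow> 'a \<Rightarrow> complex^'n^'n).
           (\<forall>k\<le>CARD('n). openin X (U k)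
               \<and> continuous_map (subtopology X (U k)) euclidean (p k)
               \<and> (\<forall>x\<in>U k. mproj (p k x) \<and> rank (p k x) = k))
         \<and> (\<Union>k\<le>CARD('n). U k) = topspace X
         \<and> (\<forall>k l x. k \<le> l \<and> l \<le> CARD('n) \<and> x \<in> U k \<and> x \<in> U l \<longrightarrow> mle (p k x) (p l x))
         \<and> (\<forall>k\<le>CARD('n). \<forall>x\<in>U k. p k x ** a x = a x \<and> c x ** p k x = p k x)"
proof -
  have herm: "\<And>x. x \<in> topspace X \<Longrightarrow> cadj (b x) = b x"
    using assms(6) mpos_hermitian by blast
  define U where "U k = {x \<in> topspace X. has_spectral_cut (b x) k}" for k
  define p where "p k x = cut_proj (b x) k" for k x
  have "openin X (U k) \<and> continuous_map (subtopology X (U k)) euclidean (p k)" for k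
    unfolding U_def p_def
    by (rule openin_continuous_map_of_local) (rule cut_proj_locally_continuous[OF assms(4) herm])
  moreover have "(\<Union>k\<le>CARD('n). U k) = topspace X"
    using ex_has_spectral_cut by (auto simp: U_def)
  moreover have "mproj (p k x) \<and> rank (p k x) = k \<and> p k x ** a x = a x \<and> c x ** p k x = p k x"
    if "x \<in> U k" for k x
    using that herm assms(7,8) unfolding U_def p_def by (intro cut_proj_properties) auto
  moreover have "mle (p k x) (p l x)" if "k \<le> l" "x \<in> U k" "x \<in> U l" for k l x
    using that herm by (simp add: U_def p_def mle_cut_proj)
  ultimately show ?thesis
    by (intro exI[of _ U] exI[of _ p]) auto
qed

end
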